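(* Let $\mathscr{A}$ be a closed set of games with misère quotient $(\mathcal{Q},\mathcal{P})$ and quotient map $\Phi$, and let $G$ be a game all of whose options lie in $\mathscr{A}$. Suppose there is $H\in\mathscr{A}$ with $\{\Phi(G'):G'\text{ an option of }G\}=\{\Phi(H'):H'\text{ an option of }H\}$. Let $\mathscr{A}^+=\mathrm{cl}(\mathscr{A}\cup\{G\})$ with quotient map $\Phi^+$. Then $\mathcal{Q}(\mathscr{A}^+)\cong\mathcal{Q}(\mathscr{A})$ via an isomorphism of bipartite monoids $\iota:\mathcal{Q}(\mathscr{A})\to\mathcal{Q}(\mathscr{A}^+)$ satisfying $\iota(\Phi(X))=\Phi^+(X)$ for all $X\in\mathscr{A}$, and $\Phi^+(G)=\Phi^+(H)$.
   Context: Games are finite, loopfree impartial games identified with the finite set of their options; disjunctive sum $G+H=\{G'+H\}\cup\{G+H'\}$. Misère outcome: $o^-(G)=\mathscr{P}$ iff $G\neq0$ and every option has outcome $\mathscr{N}$; otherwise $\mathscr{N}$. A set of games is closed if it contains all options of its members and is closed under $+$. $\mathrm{cl}(\mathscr{S})$ is the closure under addition of the set of all subpositions of members of $\mathscr{S}$. For closed $\mathscr{A}$: $G\equiv_\mathscr{A}H$ iff $o^-(G+X)=o^-(H+X)$ for all $X\in\mathscr{A}$; the misère quotient $\mathcal{Q}(\mathscr{A})=(\mathcal{Q},\mathcal{P})$ is the commutative monoid of $\equiv_\mathscr{A}$-classes ($[G][H]=[G+H]$) together with the set $\mathcal{P}$ of classes of misère $\mathscr{P}$-positions; $\Phi(G)=[G]$.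 An isomorphism of bipartite monoids $(\mathcal{Q},\mathcal{P})\to(\mathcal{S},\mathcal{R})$ is a monoid isomorphism $f$ with $x\in\mathcal{P}\iff f(x)\in\mathcal{R}$. *)

theory Defs
  imports Main "HOL-Library.FSet"
begin

text \<open>Finite loopfree impartial games, identified with the finite set of their options.\<close>
datatype game = Game (opts: "game fset")

definition optrel :: "(game \<times> game) set" where
  "optrel = {(x, g). x |\<in>| opts g}"

lemma wf_optrel: "wf optrel"
  unfolding optrel_def
proof (rule wfUNIVI)
  fix P :: "game \<Rightarrow> bool" and g
  assume H: "\<forall>x. (\<forall>y. (y, x) \<in> {(x, g). x |\<in>| opts g} \<longrightarrow> P y) \<longrightarrow> P x"
  show "P g"
    by (induction g) (use H in auto)
qed

definition gzero :: game where "gzero = Game {||}"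

function gplus :: "game \<Rightarrow> game \<Rightarrow> game" where
  "gplus g h = Game ((\<lambda>g'. gplus g' h) |`| opts g |\<union>| (\<lambda>h'. gplus g h') |`| opts h)"
  by auto
termination
  by (relation "optrel <*lex*> optrel")
     (auto simp: wf_optrel[unfolded optrel_def] optrel_def)

text \<open>Misere outcome: misereP g holds iff o^-(g) = P (otherwise o^-(g) = N).\<close>
function misereP :: "game \<Rightarrow> bool" where
  "misereP g = (g \<noteq> gzero \<and> (\<forall>x\<in>fset (opts g). \<not> misereP x))"
  by auto
termination
  by (relation optrel) (auto simp: wf_optrel[unfolded optrel_def] optrel_def)

definition subpos :: "game \<Rightarrow> game \<Rightarrow> bool" where
  "subpos x g \<longleftrightarrow> (x, g) \<in> optrel\<^sup>*"

definition closed_set :: "game set \<Rightarrow> bool" where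
  "closed_set A \<longleftrightarrow> (\<forall>g\<in>A. \<forall>x\<in>fset (opts g). x \<in> A) \<and> (\<forall>g\<in>A. \<forall>h\<in>A. gplus g h \<in> A)"

inductive_set cl :: "game set \<Rightarrow> game set" for S :: "game set" where
  sub: "g \<in> S \<Longrightarrow> subpos x g \<Longrightarrow> x \<in> cl S"
| add: "g \<in> cl S \<Longrightarrow> h \<in> cl S \<Longrightarrow> gplus g h \<in> cl S"

definition indist :: "game set \<Rightarrow> game \<Rightarrow> game \<Rightarrow> bool" where
  "indist A g h \<longleftrightarrow> (\<forall>x\<in>A. misereP (gplus g x) = misereP (gplus h x))"

definition qmap :: "game set \<Rightarrow> game \<Rightarrow> game set" where
  "qmap A g = {h \<in> A. indist A g h}"

definition qcarrier :: "game set \<Rightarrow> game set set" where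
  "qcarrier A = qmap A ` A"

definition qmult :: "game set \<Rightarrow> game set \<Rightarrow> game set \<Rightarrow> game set" where
  "qmult A x y = qmap A (gplus (SOME g. g \<in> x) (SOME h. h \<in> y))"

definition qPset :: "game set \<Rightarrow> game set set" where
  "qPset A = qmap A ` {g \<in> A. misereP g}"

definition bip_iso :: "game set \<Rightarrow> game set \<Rightarrow> (game set \<Rightarrow> game set) \<Rightarrow> bool" where
  "bip_iso A B f \<longleftrightarrow>
     bij_betw f (qcarrier A) (qcarrier B) \<and>
     (\<forall>x\<in>qcarrier A. \<forall>y\<in>qcarrier A. f (qmult A x y) = qmult B (f x) (f y)) \<and>
     f (qmap A gzero) = qmap B gzero \<and>
     (\<forall>x\<in>qcarrier A. x \<in> qPset A \<longleftrightarrow> f x \<in> qPset B)"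

end

theory Submission
  imports Defs
begin

(*
  Since the options of G lie in A, every element of cl(A \<union> {G}) has the form n G + X with
  X \<in> A.  For X \<in> A the games n G + X and n H + X have the same misere outcome, by induction
  on n and then on X: their options correspond, an option of G being matched with an option
  of H that is indistinguishable from it modulo A.  Consequently games of A that are
  indistinguishable modulo A stay so modulo cl(A \<union> {G}), and n G + X is indistinguishable
  from n H + X \<in> A.  So the inclusion of A induces a bijection of quotients, which respects
  sums and P-positions because both are computed on representatives.
*)

(* Both defining equations unfold forever under the simplifier. *)
declare gplus.simps[simp del] misereP.simps[simp del]

lemma game_eqI: "fset (opts g) = fset (opts h) \<Longrightarrow> g = h"
  by (metis fset_inject game.collapse)

lemma gzero_iff: "g = gzero \<longleftrightarrow> fset (opts g) = {}"
  unfolding gzero_def by (metis bot_fset.rep_eq fset_inject game.collapse game.sel)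

lemma fset_opts_gplus:
  "fset (opts (gplus g h)) = (\<lambda>g'. gplus g' h) ` fset (opts g) \<union> (\<lambda>h'. gplus g h') ` fset (opts h)"
  by (subst gplus.simps) simp

lemma opts_gzero [simp]: "opts gzero = {||}"
  by (simp add: gzero_def)

lemma gplus_gzero [simp]: "gplus g gzero = g"
proof (induction g)
  case (Game xs)
  show ?case
    by (rule game_eqI) (simp add: fset_opts_gplus Game cong: image_cong)
qed

lemma gplus_commute: "gplus g h = gplus h g"
proof (induction g h rule: gplus.induct)
  case (1 g h)
  show ?case by (rule game_eqI) (auto simp: fset_opts_gplus 1)
qed

lemma gplus_assoc: "gplus (gplus a b) c = gplus a (gplus b c)"
proof (induction a arbitrary: b c)
  case (Game xa)
  note IHa = Game.IH
  show ?case
  proof (induction b arbitrary: c)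
    case (Game xb)
    note IHb = Game.IH
    show ?case
    proof (induction c)
      case (Game xc)
      show ?case
        by (rule game_eqI)
          (simp add: fset_opts_gplus image_Un image_image IHa IHb Game.IH Un_ac cong: image_cong)
    qed
  qed
qed

interpretation gplus: comm_monoid gplus gzero
  by unfold_locales (auto simp: gplus_assoc intro: gplus_commute)

lemmas gplus_ac = gplus.assoc gplus.commute gplus.left_commute

lemma gplus_eq_gzero_iff: "gplus g h = gzero \<longleftrightarrow> g = gzero \<and> h = gzero"
  by (auto simp: gzero_iff fset_opts_gplus)

fun gmul :: "nat \<Rightarrow> game \<Rightarrow> game" where
  "gmul 0 g = gzero"
| "gmul (Suc n) g = gplus g (gmul n g)"

lemma gmul_add: "gmul (m + n) g = gplus (gmul m g) (gmul n g)"
  by (induction m) (simp_all add: gplus.assoc)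

lemma fset_opts_gmul_Suc: "fset (opts (gmul (Suc n) g)) = gplus (gmul n g) ` fset (opts g)"
proof (induction n)
  case 0
  then show ?case by (simp add: gplus.commute)
next
  case (Suc n)
  then show ?case
    by (subst gmul.simps(2)[of "Suc n"], subst fset_opts_gplus) (auto simp: image_image gplus_ac)
qed

lemma fset_opts_gplus_gmul_Suc:
  "fset (opts (gplus (gmul (Suc n) g) x)) =
     (\<lambda>g'. gplus (gplus (gmul n g) g') x) ` fset (opts g) \<union> gplus (gmul (Suc n) g) ` fset (opts x)"
  by (simp only: fset_opts_gplus[of "gmul (Suc n) g"] fset_opts_gmul_Suc image_image)

lemma gmul_Suc_eq_gzero_iff: "gmul (Suc n) g = gzero \<longleftrightarrow> g = gzero"
  unfolding gzero_iff fset_opts_gmul_Suc by simp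

lemma misereP_cong_opts:
  assumes "g = gzero \<longleftrightarrow> h = gzero"
    and "\<And>g'. g' \<in> fset (opts g) \<Longrightarrow> \<exists>h'\<in>fset (opts h). misereP g' = misereP h'"
    and "\<And>h'. h' \<in> fset (opts h) \<Longrightarrow> \<exists>g'\<in>fset (opts g). misereP g' = misereP h'"
  shows "misereP g = misereP h"
  using assms by (subst (1 2) misereP.simps) blast

lemma indist_refl: "indist C g g"
  by (simp add: indist_def)

lemma indist_sym: "indist C g h \<Longrightarrow> indist C h g"
  by (simp add: indist_def)

lemma indist_trans: "indist C g h \<Longrightarrow> indist C h k \<Longrightarrow> indist C g k"
  by (simp add: indist_def)

lemma indist_mono: "indist B g h \<Longrightarrow> A \<subseteq> B \<Longrightarrow> indist A g h"
  by (auto simp: indist_def)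

lemma indist_misereP: "indist C g h \<Longrightarrow> gzero \<in> C \<Longrightarrow> misereP g = misereP h"
  unfolding indist_def by (metis gplus_gzero)

lemma indist_gplus:
  assumes C: "\<forall>a\<in>C. \<forall>b\<in>C. gplus a b \<in> C"
    and a: "indist C a a'" and b: "indist C b b'" and "a' \<in> C" "b \<in> C"
  shows "indist C (gplus a b) (gplus a' b')"
  unfolding indist_def
proof
  fix z assume "z \<in> C"
  have "misereP (gplus (gplus a b) z) = misereP (gplus a (gplus b z))"
    by (simp add: gplus_ac)
  also have "\<dots> = misereP (gplus a' (gplus b z))"
    using a C \<open>z \<in> C\<close> \<open>b \<in> C\<close> unfolding indist_def by blast
  also have "\<dots> = misereP (gplus b (gplus a' z))"
    by (simp add: gplus_ac)
  also have "\<dots> = misereP (gplus b' (gplus a' z))"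
    using b C \<open>z \<in> C\<close> \<open>a' \<in> C\<close> unfolding indist_def by blast
  also have "\<dots> = misereP (gplus (gplus a' b') z)"
    by (simp add: gplus_ac)
  finally show "misereP (gplus (gplus a b) z) = misereP (gplus (gplus a' b') z)" .
qed

lemma qmap_eqI: "indist C g h \<Longrightarrow> qmap C g = qmap C h"
  unfolding qmap_def using indist_sym indist_trans by blast

lemma qmap_eq_iff: "g \<in> C \<Longrightarrow> qmap C g = qmap C h \<longleftrightarrow> indist C g h"
  unfolding qmap_def using indist_refl indist_sym indist_trans by blast

lemma some_in_qmap:
  assumes "g \<in> C"
  shows "(SOME x. x \<in> qmap C g) \<in> C" and "indist C g (SOME x. x \<in> qmap C g)"
proof -
  have "g \<in> qmap C g"
    using assms by (simp add: qmap_def indist_refl)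
  then have "(SOME x. x \<in> qmap C g) \<in> qmap C g"
    by (rule someI)
  then show "(SOME x. x \<in> qmap C g) \<in> C" and "indist C g (SOME x. x \<in> qmap C g)"
    by (simp_all add: qmap_def)
qed

lemma qmult_qmap:
  assumes C: "\<forall>a\<in>C. \<forall>b\<in>C. gplus a b \<in> C" and "g \<in> C" "h \<in> C"
  shows "qmult C (qmap C g) (qmap C h) = qmap C (gplus g h)"
proof -
  define g' where "g' = (SOME x. x \<in> qmap C g)"
  define h' where "h' = (SOME x. x \<in> qmap C h)"
  have "indist C (gplus g h) (gplus g' h')"
    using indist_gplus[OF C] some_in_qmap[OF \<open>g \<in> C\<close>] some_in_qmap[OF \<open>h \<in> C\<close>] \<open>h \<in> C\<close>
    unfolding g'_def h'_def by blast
  then show ?thesis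
    unfolding qmult_def g'_def h'_def by (metis qmap_eqI)
qed

lemma qmap_in_qPset_iff: "gzero \<in> C \<Longrightarrow> g \<in> C \<Longrightarrow> qmap C g \<in> qPset C \<longleftrightarrow> misereP g"
  unfolding qPset_def using qmap_eq_iff indist_misereP indist_sym by blast

lemma bip_iso_qmap_extension:
  assumes AB: "A \<subseteq> B" and zero: "gzero \<in> A"
    and A_plus: "\<forall>a\<in>A. \<forall>b\<in>A. gplus a b \<in> A" and B_plus: "\<forall>a\<in>B. \<forall>b\<in>B. gplus a b \<in> B"
    and indist_ext: "\<And>g h. g \<in> A \<Longrightarrow> h \<in> A \<Longrightarrow> indist A g h \<Longrightarrow> indist B g h"
    and representative: "\<And>z. z \<in> B \<Longrightarrow> \<exists>g\<in>A. indist B z g"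
  shows "\<exists>\<iota>. bip_iso A B \<iota> \<and> (\<forall>g\<in>A. \<iota> (qmap A g) = qmap B g)"
proof (intro exI conjI)
  define \<iota> where "\<iota> c = qmap B (SOME x. x \<in> c)" for c
  show \<iota>_qmap: "\<forall>g\<in>A. \<iota> (qmap A g) = qmap B g"
    using some_in_qmap indist_ext indist_sym qmap_eqI unfolding \<iota>_def by metis
  have "inj_on \<iota> (qcarrier A)"
  proof (rule inj_onI)
    fix c d assume "c \<in> qcarrier A" "d \<in> qcarrier A" "\<iota> c = \<iota> d"
    then obtain g h where "g \<in> A" "h \<in> A" "c = qmap A g" "d = qmap A h" "qmap B g = qmap B h"
      unfolding qcarrier_def using \<iota>_qmap by auto
    then show "c = d"
      using AB qmap_eq_iff indist_mono by (metis subsetD)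
  qed
  moreover have "\<iota> ` qcarrier A = qcarrier B"
  proof
    show "\<iota> ` qcarrier A \<subseteq> qcarrier B"
      unfolding qcarrier_def using \<iota>_qmap AB by auto
    show "qcarrier B \<subseteq> \<iota> ` qcarrier A"
      unfolding qcarrier_def using \<iota>_qmap representative qmap_eqI by fastforce
  qed
  moreover have "\<iota> (qmult A c d) = qmult B (\<iota> c) (\<iota> d)"
    if cd: "c \<in> qcarrier A" "d \<in> qcarrier A" for c d
  proof -
    obtain g h where gh: "g \<in> A" "h \<in> A" "c = qmap A g" "d = qmap A h"
      using cd unfolding qcarrier_def by blast
    have "\<iota> (qmult A c d) = qmap B (gplus g h)"
      using gh qmult_qmap[OF A_plus] A_plus \<iota>_qmap by simp
    also have "\<dots> = qmult B (\<iota> c) (\<iota> d)"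
      using gh AB qmult_qmap[OF B_plus] \<iota>_qmap by (simp add: subset_iff)
    finally show ?thesis .
  qed
  moreover have "c \<in> qPset A \<longleftrightarrow> \<iota> c \<in> qPset B" if c: "c \<in> qcarrier A" for c
  proof -
    obtain g where "g \<in> A" "c = qmap A g"
      using c unfolding qcarrier_def by blast
    then show ?thesis
      using zero qmap_in_qPset_iff[of A g] qmap_in_qPset_iff[of B g] AB \<iota>_qmap by auto
  qed
  ultimately show "bip_iso A B \<iota>"
    unfolding bip_iso_def bij_betw_def using \<iota>_qmap zero by simp
qed

lemma closed_set_opts: "closed_set A \<Longrightarrow> g \<in> A \<Longrightarrow> x \<in> fset (opts g) \<Longrightarrow> x \<in> A"
  unfolding closed_set_def by blast

lemma closed_set_gplus: "closed_set A \<Longrightarrow> g \<in> A \<Longrightarrow> h \<in> A \<Longrightarrow> gplus g h \<in> A"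
  unfolding closed_set_def by blast

lemma closed_set_gzero: "closed_set A \<Longrightarrow> g \<in> A \<Longrightarrow> gzero \<in> A"
proof (induction g)
  case (Game xs)
  show ?case
  proof (cases "xs = {||}")
    case True
    then show ?thesis using Game.prems by (simp add: gzero_def)
  next
    case False
    then obtain x where "x |\<in>| xs" by blast
    then show ?thesis using Game closed_set_opts[OF Game.prems] by simp
  qed
qed

lemma closed_set_gmul: "closed_set A \<Longrightarrow> g \<in> A \<Longrightarrow> gmul n g \<in> A"
  by (induction n) (auto intro: closed_set_gzero closed_set_gplus)

lemma closed_set_subpos:
  assumes "closed_set A" "g \<in> A" "subpos x g"
  shows "x \<in> A"
proof -
  have "(x, g) \<in> optrel\<^sup>*"
    using \<open>subpos x g\<close> by (simp add: subpos_def)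
  then show ?thesis
    by (induction rule: converse_rtrancl_induct)
      (use assms in \<open>auto simp: optrel_def closed_set_opts\<close>)
qed

lemma subset_cl: "S \<subseteq> cl S"
  by (auto intro: cl.sub simp: subpos_def)

lemma cl_Un_singleton_subset:
  assumes A: "closed_set A" and "gzero \<in> A" and GA: "\<forall>x\<in>fset (opts G). x \<in> A"
  shows "cl (A \<union> {G}) \<subseteq> {gplus (gmul n G) X | n X. X \<in> A}"
proof
  fix z assume "z \<in> cl (A \<union> {G})"
  then show "z \<in> {gplus (gmul n G) X | n X. X \<in> A}"
  proof (induction rule: cl.induct)
    case (sub g x)
    have "x = G \<or> x \<in> A"
    proof (cases "g \<in> A")
      case True
      then show ?thesis using closed_set_subpos[OF A] sub.hyps(2) by blast
    next
      case False
      then have "(x, G) \<in> optrel\<^sup>*"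
        using sub.hyps by (simp add: subpos_def)
      then show ?thesis
      proof (cases rule: rtranclE)
        case (step y)
        then have "y \<in> A"
          using GA by (simp add: optrel_def)
        then show ?thesis
          using closed_set_subpos[OF A, of y x] step(1) by (simp add: subpos_def)
      qed simp
    qed
    then show ?case
    proof
      assume "x = G"
      then have "x = gplus (gmul 1 G) gzero"
        by simp
      then show ?case
        using \<open>gzero \<in> A\<close> by blast
    next
      assume "x \<in> A"
      moreover have "x = gplus (gmul 0 G) x"
        by (simp add: gplus.commute)
      ultimately show ?case
        by blast
    qed
  next
    case (add g h)
    then obtain m n X Y where "X \<in> A" "Y \<in> A" "g = gplus (gmul m G) X" "h = gplus (gmul n G) Y"
      by blast
    then have "gplus X Y \<in> A" "gplus g h = gplus (gmul (m + n) G) (gplus X Y)"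
      using closed_set_gplus[OF A] by (simp_all add: gmul_add gplus_ac)
    then show ?case
      by blast
  qed
qed

locale option_classes_agree =
  fixes A :: "game set" and G H :: game
  assumes closed: "closed_set A"
    and opts_G: "\<forall>x\<in>fset (opts G). x \<in> A"
    and H_in: "H \<in> A"
    and qmap_opts: "qmap A ` fset (opts G) = qmap A ` fset (opts H)"
begin

lemma gzero_in: "gzero \<in> A"
  using closed_set_gzero[OF closed H_in] .

lemma opt_G_match: "G' \<in> fset (opts G) \<Longrightarrow> \<exists>H'\<in>fset (opts H). indist A G' H'"
  using qmap_opts opts_G qmap_eq_iff by (metis imageE imageI)

lemma opt_H_match: "H' \<in> fset (opts H) \<Longrightarrow> \<exists>G'\<in>fset (opts G). indist A G' H'"
  using qmap_opts opts_G qmap_eq_iff by (metis imageE imageI)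

lemma G_eq_gzero_iff: "G = gzero \<longleftrightarrow> H = gzero"
  using qmap_opts by (auto simp: gzero_iff)

lemma misereP_gmul_swap: "X \<in> A \<Longrightarrow> misereP (gplus (gmul n G) X) = misereP (gplus (gmul n H) X)"
proof (induction n arbitrary: X)
  case 0
  show ?case by simp
next
  case (Suc n)
  have swap_option: "misereP (gplus (gplus (gmul n G) G') X) = misereP (gplus (gplus (gmul n H) H') X)"
    if "indist A G' H'" "G' \<in> A" "X \<in> A" for G' H' X
  proof -
    have "misereP (gplus (gplus (gmul n G) G') X) = misereP (gplus (gmul n G) (gplus G' X))"
      by (simp add: gplus.assoc)
    also have "\<dots> = misereP (gplus (gmul n H) (gplus G' X))"
      using Suc.IH closed_set_gplus[OF closed that(2,3)] .
    also have "\<dots> = misereP (gplus G' (gplus (gmul n H) X))"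
      by (simp add: gplus_ac)
    also have "\<dots> = misereP (gplus H' (gplus (gmul n H) X))"
      using \<open>indist A G' H'\<close> closed_set_gplus[OF closed closed_set_gmul[OF closed H_in] \<open>X \<in> A\<close>]
      unfolding indist_def by blast
    also have "\<dots> = misereP (gplus (gplus (gmul n H) H') X)"
      by (simp add: gplus_ac)
    finally show ?thesis .
  qed
  show ?case
    using Suc.prems
  proof (induction X rule: wf_induct_rule[OF wf_optrel])
    case (1 X)
    have IH: "misereP (gplus (gmul (Suc n) G) X') = misereP (gplus (gmul (Suc n) H) X')"
      if "X' \<in> fset (opts X)" for X'
      using 1 that closed_set_opts[OF closed] by (simp add: optrel_def)
    show ?case
    proof (rule misereP_cong_opts)
      show "gplus (gmul (Suc n) G) X = gzero \<longleftrightarrow> gplus (gmul (Suc n) H) X = gzero"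
        by (simp only: gplus_eq_gzero_iff gmul_Suc_eq_gzero_iff G_eq_gzero_iff)
    next
      fix g' assume "g' \<in> fset (opts (gplus (gmul (Suc n) G) X))"
      then show "\<exists>h'\<in>fset (opts (gplus (gmul (Suc n) H) X)). misereP g' = misereP h'"
        unfolding fset_opts_gplus_gmul_Suc
        using opt_G_match swap_option opts_G IH \<open>X \<in> A\<close> by fastforce
    next
      fix h' assume "h' \<in> fset (opts (gplus (gmul (Suc n) H) X))"
      then show "\<exists>g'\<in>fset (opts (gplus (gmul (Suc n) G) X)). misereP g' = misereP h'"
        unfolding fset_opts_gplus_gmul_Suc
        using opt_H_match swap_option opts_G IH \<open>X \<in> A\<close> by fastforce
    qed
  qed
qed

lemma misereP_gplus_gmul_swap:
  "X \<in> A \<Longrightarrow> W \<in> A \<Longrightarrow>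
    misereP (gplus X (gplus (gmul m G) W)) = misereP (gplus X (gplus (gmul m H) W))"
  using misereP_gmul_swap[of "gplus X W" m] closed_set_gplus[OF closed] by (simp add: gplus_ac)

lemma cl_decomp: "z \<in> cl (A \<union> {G}) \<Longrightarrow> \<exists>m W. W \<in> A \<and> z = gplus (gmul m G) W"
  using cl_Un_singleton_subset[OF closed gzero_in opts_G] by blast

lemma indist_cl_if_indist:
  assumes "X \<in> A" "Y \<in> A" "indist A X Y"
  shows "indist (cl (A \<union> {G})) X Y"
  unfolding indist_def
proof
  fix z assume "z \<in> cl (A \<union> {G})"
  then obtain m W where W: "W \<in> A" "z = gplus (gmul m G) W"
    using cl_decomp by blast
  have "misereP (gplus X z) = misereP (gplus X (gplus (gmul m H) W))"
    using W misereP_gplus_gmul_swap \<open>X \<in> A\<close> by simp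
  also have "\<dots> = misereP (gplus Y (gplus (gmul m H) W))"
    using \<open>indist A X Y\<close> closed_set_gplus[OF closed closed_set_gmul[OF closed H_in] W(1)]
    unfolding indist_def by blast
  also have "\<dots> = misereP (gplus Y z)"
    using W misereP_gplus_gmul_swap \<open>Y \<in> A\<close> by simp
  finally show "misereP (gplus X z) = misereP (gplus Y z)" .
qed

lemma indist_cl_gmul_swap:
  assumes "X \<in> A"
  shows "indist (cl (A \<union> {G})) (gplus (gmul n G) X) (gplus (gmul n H) X)"
  unfolding indist_def
proof
  fix z assume "z \<in> cl (A \<union> {G})"
  then obtain m W where W: "W \<in> A" "z = gplus (gmul m G) W"
    using cl_decomp by blast
  have XW: "gplus X W \<in> A" "gplus (gmul n H) X \<in> A"
    using W(1) \<open>X \<in> A\<close> closed_set_gplus[OF closed] closed_set_gmul[OF closed H_in] by simp_all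
  have "misereP (gplus (gplus (gmul n G) X) z) = misereP (gplus (gmul (n + m) G) (gplus X W))"
    using W by (simp add: gmul_add gplus_ac)
  also have "\<dots> = misereP (gplus (gmul (n + m) H) (gplus X W))"
    using misereP_gmul_swap XW(1) .
  also have "\<dots> = misereP (gplus (gplus (gmul n H) X) (gplus (gmul m H) W))"
    by (simp add: gmul_add gplus_ac)
  also have "\<dots> = misereP (gplus (gplus (gmul n H) X) z)"
    using W misereP_gplus_gmul_swap[OF XW(2) W(1)] by simp
  finally show "misereP (gplus (gplus (gmul n G) X) z) = misereP (gplus (gplus (gmul n H) X) z)" .
qed

end

theorem mainTheorem13:
  fixes A :: "game set" and G H :: game
  assumes "closed_set A"
    and "\<forall>x\<in>fset (opts G). x \<in> A"
    and "H \<in> A"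
    and "qmap A ` fset (opts G) = qmap A ` fset (opts H)"
  shows "\<exists>\<iota>. bip_iso A (cl (A \<union> {G})) \<iota> \<and>
             (\<forall>X\<in>A. \<iota> (qmap A X) = qmap (cl (A \<union> {G})) X) \<and>
             qmap (cl (A \<union> {G})) G = qmap (cl (A \<union> {G})) H"
proof -
  interpret option_classes_agree A G H
    using assms by unfold_locales
  have "\<exists>\<iota>. bip_iso A (cl (A \<union> {G})) \<iota> \<and> (\<forall>X\<in>A. \<iota> (qmap A X) = qmap (cl (A \<union> {G})) X)"
  proof (rule bip_iso_qmap_extension)
    show "A \<subseteq> cl (A \<union> {G})"
      using subset_cl by blast
    show "\<forall>a\<in>A. \<forall>b\<in>A. gplus a b \<in> A"
      using closed_set_gplus[OF closed] by blast
    show "\<forall>a\<in>cl (A \<union> {G}). \<forall>b\<in>cl (A \<union> {G}). gplus a b \<in> cl (A \<union> {G})"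
      using cl.add by blast
    show "\<exists>X\<in>A. indist (cl (A \<union> {G})) z X" if "z \<in> cl (A \<union> {G})" for z
      using cl_decomp[OF that] indist_cl_gmul_swap closed_set_gplus[OF closed closed_set_gmul[OF closed H_in]]
      by blast
  qed (use gzero_in indist_cl_if_indist in auto)
  moreover have "qmap (cl (A \<union> {G})) G = qmap (cl (A \<union> {G})) H"
    using qmap_eqI[OF indist_cl_gmul_swap[OF gzero_in, of 1]] by simp
  ultimately show ?thesis
    by blast
qed

end
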